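(* For every integer $n\geq 1$, \[ \sum_{\sigma\in\mathcal{Q}_n} q^{\operatorname{lrmin}(\sigma)} x^{\operatorname{ap}(\sigma)} y^{\operatorname{even}(\sigma)}= \sum_{\pi\in \overline{\mathfrak{S}}_n}q^{\operatorname{lrmin}(\pi)} x^{\operatorname{asc}(\pi)} y^{\operatorname{mark}(\pi)}. \]
   Context: Let $[n]_2$ be the multiset $\{1,1,2,2,\dots,n,n\}$. A Stirling permutation of order $n$ is a permutation $\sigma=\sigma_1\cdots\sigma_{2n}$ of $[n]_2$ such that for each $i\in[n]$ every entry between the two occurrences of $i$ is greater than $i$; $\mathcal{Q}_n$ denotes the set of these. An ascent plateau of $\sigma\in\mathcal{Q}_n$ is an entry $\sigma_i$ with $2\le i\le 2n-1$ and $\sigma_{i-1}<\sigma_i=\sigma_{i+1}$; $\operatorname{ap}(\sigma)$ is the number of ascent plateaux. An entry $k$ of $\sigma$ is even indexed if the first occurrence of $k$ is at an even position of $\sigma$; $\operatorname{even}(\sigma)$ is the number of even indexed entries (each value $k\in[n]$ counted once). For a word $w=w_1\cdots w_m$, a left-to-right minimum is an entry $w_i$ with $i=1$ or $w_i<w_j$ for all $j<i$; $\operatorname{lrmin}(w)$ is the number of distinct values that are left-to-right minima (for Stirling permutations this is the number of values $k$ some occurrence of which is a left-to-right minimum). A marked permutation of $[n]$ is a permutation $\pi=\pi_1\cdots\pi_n$ of $[n]$ together with a choice of marks on some (possibly none) of its entries that are not left-to-right minima; left-to-right minima are never marked. $\overline{\mathfrak{S}}_n$ is the set of marked permutations of $[n]$.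 For $\pi\in\overline{\mathfrak{S}}_n$, $\operatorname{mark}(\pi)$ is the number of marked entries, and $\operatorname{lrmin}(\pi)$ and $\operatorname{asc}(\pi)$ are computed ignoring marks, where $\operatorname{asc}(\pi)$ is the number of indices $i\in\{2,\dots,n\}$ with $\pi_i>\pi_{i-1}$. *)

theory Defs
  imports "HOL-Library.Multiset"
begin

text \<open>Words are lists of naturals; positions are 0-indexed internally
(paper position i corresponds to list index i-1).\<close>

definition multiset2 :: "nat \<Rightarrow> nat multiset" where
  "multiset2 n = (\<Sum>i\<in>{1..n}. {#i, i#})"

definition stirling_perms :: "nat \<Rightarrow> nat list set" where
  "stirling_perms n = {\<sigma>. mset \<sigma> = multiset2 n \<and>
     (\<forall>i j k. i < j \<and> j < k \<and> k < length \<sigma> \<and> \<sigma> ! i = \<sigma> ! k \<longrightarrow> \<sigma> ! j > \<sigma> ! i)}"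

text \<open>Ascent plateaux: paper positions 2 \<le> i \<le> 2n-1 with \<sigma>_{i-1} < \<sigma>_i = \<sigma>_{i+1}.\<close>
definition ap :: "nat list \<Rightarrow> nat" where
  "ap \<sigma> = card {i. 1 \<le> i \<and> i + 1 < length \<sigma> \<and> \<sigma> ! (i - 1) < \<sigma> ! i \<and> \<sigma> ! i = \<sigma> ! (i + 1)}"

text \<open>Even indexed entries: the first occurrence of k is at an even (1-indexed) position,
i.e. at an odd 0-indexed list index.\<close>
definition even_idx :: "nat list \<Rightarrow> nat" where
  "even_idx \<sigma> = card {k \<in> set \<sigma>. even (Suc (LEAST i. i < length \<sigma> \<and> \<sigma> ! i = k))}"

definition lrmin_vals :: "nat list \<Rightarrow> nat set" where
  "lrmin_vals w = {w ! i | i. i < length w \<and> (\<forall>j<i. w ! i < w ! j)}"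

definition lrmin :: "nat list \<Rightarrow> nat" where
  "lrmin w = card (lrmin_vals w)"

definition asc :: "nat list \<Rightarrow> nat" where
  "asc \<pi> = card {i. 1 \<le> i \<and> i < length \<pi> \<and> \<pi> ! (i - 1) < \<pi> ! i}"

definition marked_perms :: "nat \<Rightarrow> (nat list \<times> nat set) set" where
  "marked_perms n = {(\<pi>, M). distinct \<pi> \<and> set \<pi> = {1..n} \<and> M \<subseteq> set \<pi> - lrmin_vals \<pi>}"

definition mark :: "nat list \<times> nat set \<Rightarrow> nat" where
  "mark p = card (snd p)"

end

theory Submission
  imports Defs
begin

(* Both sides are built by inserting the new maximum n + 1: into a Stirling permutation of
   order n as an adjacent pair in one of its 2n + 1 slots, into a marked permutation of [n]
   in one of its n + 1 slots, marked or not unless it lands in front.  In both cases the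
   front slot adds a left-to-right minimum.  For Stirling permutations a slot p \<ge> 1 creates
   a new ascent plateau unless it is adjacent to an existing one, which happens for ap slots
   of each parity, and the new pair is even indexed iff p is odd.  For marked permutations a
   slot p \<ge> 1 creates a new ascent unless p is already an ascent, and marking adds one.
   Hence both generating functions obey the same recurrence. *)

definition insert_copies :: "nat \<Rightarrow> nat \<Rightarrow> 'a \<Rightarrow> 'a list \<Rightarrow> 'a list" where
  "insert_copies p k m xs = take p xs @ replicate k m @ drop p xs"

lemma length_insert_copies [simp]:
  "p \<le> length xs \<Longrightarrow> length (insert_copies p k m xs) = length xs + k"
  by (simp add: insert_copies_def)

lemma nth_insert_copies:
  "p \<le> length xs \<Longrightarrow> j < length xs + k \<Longrightarrow>
   insert_copies p k m xs ! j = (if j < p then xs ! j else if j < p + k then m else xs ! (j - k))"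
  by (auto simp: insert_copies_def nth_append min_def)

lemma set_insert_copies [simp]: "0 < k \<Longrightarrow> set (insert_copies p k m xs) = insert m (set xs)"
  using set_append[of "take p xs" "drop p xs"] by (auto simp: insert_copies_def)

lemma mset_insert_copies: "mset (insert_copies p k m xs) = mset xs + replicate_mset k m"
  using mset_append[of "take p xs" "drop p xs"] by (auto simp: insert_copies_def)

lemma mset_insert_pair: "mset (insert_copies p 2 m xs) = mset xs + {#m, m#}"
  by (simp add: mset_insert_copies numeral_2_eq_2)

lemma distinct_insert_copies:
  "distinct xs \<Longrightarrow> m \<notin> set xs \<Longrightarrow> distinct (insert_copies p 1 m xs)"
  using distinct_append[of "take p xs" "drop p xs"] in_set_takeD[of m p xs] in_set_dropD[of m p xs]
  by (auto simp: insert_copies_def)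

lemma take_drop_insert_copies:
  "p \<le> length xs \<Longrightarrow> take p (insert_copies p k m xs) @ drop (p + k) (insert_copies p k m xs) = xs"
  by (simp add: insert_copies_def)

definition first_index :: "'a list \<Rightarrow> 'a \<Rightarrow> nat" where
  "first_index xs x = (LEAST i. i < length xs \<and> xs ! i = x)"

lemma first_index_eqI:
  assumes "i < length xs" "xs ! i = x" "\<forall>j<i. xs ! j \<noteq> x"
  shows "first_index xs x = i"
  unfolding first_index_def
  by (rule Least_equality) (use assms in \<open>auto simp: not_less[symmetric]\<close>)

lemma first_index_correct:
  assumes "x \<in> set xs"
  shows "first_index xs x < length xs" "xs ! first_index xs x = x" "\<forall>j<first_index xs x. xs ! j \<noteq> x"
proof -
  obtain i where "i < length xs" "xs ! i = x" using assms by (auto simp: in_set_conv_nth)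
  then have "first_index xs x < length xs \<and> xs ! first_index xs x = x"
    unfolding first_index_def by (rule LeastI[of _ i, OF conjI])
  then show "first_index xs x < length xs" "xs ! first_index xs x = x" by auto
  show "\<forall>j<first_index xs x. xs ! j \<noteq> x"
  proof (intro allI impI notI)
    fix j assume "j < first_index xs x" "xs ! j = x"
    moreover from this have "first_index xs x \<le> j"
      using \<open>first_index xs x < length xs\<close> unfolding first_index_def by (intro Least_le) simp
    ultimately show False by simp
  qed
qed

lemma first_index_insert_copies_new:
  assumes "m \<notin> set xs" "p \<le> length xs" "0 < k"
  shows "first_index (insert_copies p k m xs) m = p"
  using assms by (intro first_index_eqI) (auto simp: nth_insert_copies in_set_conv_nth)

lemma first_index_insert_copies_old:
  assumes "x \<in> set xs" "x \<noteq> m" "p \<le> length xs"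
  shows "first_index (insert_copies p k m xs) x =
    (if first_index xs x < p then first_index xs x else first_index xs x + k)"
proof (rule first_index_eqI)
  note fi = first_index_correct[OF assms(1)]
  show "(if first_index xs x < p then first_index xs x else first_index xs x + k)
      < length (insert_copies p k m xs)"
    using fi assms by simp
  show "insert_copies p k m xs ! (if first_index xs x < p then first_index xs x else first_index xs x + k) = x"
    using fi assms by (auto simp: nth_insert_copies)
  show "\<forall>j<(if first_index xs x < p then first_index xs x else first_index xs x + k).
      insert_copies p k m xs ! j \<noteq> x"
    using fi assms by (auto simp: nth_insert_copies split: if_splits)
qed

lemma insert_copies_inj:
  assumes "m \<notin> set xs" "m \<notin> set ys" "p \<le> length xs" "q \<le> length ys" "0 < k"
    and eq: "insert_copies p k m xs = insert_copies q k m ys"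
  shows "p = q \<and> xs = ys"
proof -
  have "p = q"
    using first_index_insert_copies_new[of m xs p k] first_index_insert_copies_new[of m ys q k] assms
    by simp
  then show ?thesis
    using take_drop_insert_copies[OF assms(3), of k m] take_drop_insert_copies[OF assms(4), of k m] eq
    by metis
qed

lemma lrmin_vals_Nil [simp]: "lrmin_vals [] = {}"
  by (simp add: lrmin_vals_def)

lemma lrmin_vals_Cons: "lrmin_vals (x # w) = insert x {y \<in> lrmin_vals w. y < x}"
proof (intro set_eqI iffI)
  fix z assume "z \<in> lrmin_vals (x # w)"
  then obtain i where "z = (x # w) ! i" "i < length (x # w)" "\<forall>j<i. (x # w) ! i < (x # w) ! j"
    by (auto simp: lrmin_vals_def)
  then show "z \<in> insert x {y \<in> lrmin_vals w. y < x}"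
    by (cases i) (auto simp: lrmin_vals_def All_less_Suc2)
next
  fix z assume "z \<in> insert x {y \<in> lrmin_vals w. y < x}"
  then consider "z = x" | i where "z = w ! i" "i < length w" "w ! i < x" "\<forall>j<i. w ! i < w ! j"
    by (auto simp: lrmin_vals_def)
  then show "z \<in> lrmin_vals (x # w)"
  proof cases
    case 1 then show ?thesis by (force simp: lrmin_vals_def)
  next
    case 2 then show ?thesis
      unfolding lrmin_vals_def by (intro CollectI exI[of _ "Suc i"]) (auto simp: All_less_Suc2)
  qed
qed

lemma lrmin_vals_append:
  "lrmin_vals (xs @ ys) = lrmin_vals xs \<union> {y \<in> lrmin_vals ys. \<forall>z\<in>set xs. y < z}"
  by (induction xs) (auto simp: lrmin_vals_Cons)

lemma lrmin_vals_subset: "lrmin_vals w \<subseteq> set w"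
  by (auto simp: lrmin_vals_def)

lemma lrmin_vals_replicate: "0 < k \<Longrightarrow> lrmin_vals (replicate k m) = {m}"
  by (induction k) (auto simp: lrmin_vals_Cons dest!: subsetD[OF lrmin_vals_subset])

lemma lrmin_vals_insert_copies:
  assumes "\<forall>z\<in>set xs. z < m" "p \<le> length xs" "0 < k"
  shows "lrmin_vals (insert_copies p k m xs) =
    (if p = 0 then insert m (lrmin_vals xs) else lrmin_vals xs)"
proof -
  have block: "lrmin_vals (replicate k m @ drop p xs) = insert m (lrmin_vals (drop p xs))"
    using assms lrmin_vals_subset[of "drop p xs"] in_set_dropD[of _ p xs]
    by (auto simp: lrmin_vals_append lrmin_vals_replicate)
  show ?thesis
  proof (cases "p = 0")
    case False
    with assms(2) have "take p xs \<noteq> []" by auto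
    then obtain z where "z \<in> set (take p xs)" by (meson list.set_sel(1))
    moreover have "z < m" using calculation assms(1) in_set_takeD by fastforce
    ultimately have "{y \<in> lrmin_vals (replicate k m @ drop p xs). \<forall>z\<in>set (take p xs). y < z}
        = {y \<in> lrmin_vals (drop p xs). \<forall>z\<in>set (take p xs). y < z}"
      unfolding block by auto
    then have "lrmin_vals (insert_copies p k m xs) = lrmin_vals (take p xs @ drop p xs)"
      unfolding insert_copies_def lrmin_vals_append[of "take p xs"] by simp
    then show ?thesis using False by simp
  qed (use block in \<open>simp add: insert_copies_def\<close>)
qed

lemma lrmin_insert_copies:
  assumes "\<forall>z\<in>set xs. z < m" "p \<le> length xs" "0 < k"
  shows "lrmin (insert_copies p k m xs) = lrmin xs + (if p = 0 then 1 else 0)"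
proof -
  have "m \<notin> lrmin_vals xs" "finite (lrmin_vals xs)"
    using assms(1) lrmin_vals_subset finite_subset by blast+
  then show ?thesis by (simp add: lrmin_def lrmin_vals_insert_copies[OF assms])
qed

lemma card_Un_shifted:
  fixes A B C :: "nat set"
  assumes "finite A" "finite B" "finite C"
    and "\<forall>a\<in>A. \<forall>c\<in>C. a < c" "\<forall>c\<in>C. \<forall>b\<in>B. c < b + d" "\<forall>a\<in>A. \<forall>b\<in>B. a < b + d"
  shows "card (A \<union> C \<union> (\<lambda>i. i + d) ` B) = card A + card C + card B"
proof -
  have "card (A \<union> C) = card A + card C"
    using assms by (intro card_Un_disjoint) auto
  moreover have "card (A \<union> C \<union> (\<lambda>i. i + d) ` B) = card (A \<union> C) + card ((\<lambda>i. i + d) ` B)"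
    using assms by (intro card_Un_disjoint) auto
  moreover have "card ((\<lambda>i. i + d) ` B) = card B"
    by (rule card_image) (simp add: inj_on_def)
  ultimately show ?thesis by simp
qed

definition plateau :: "nat list \<Rightarrow> nat \<Rightarrow> bool" where
  "plateau s i \<longleftrightarrow> 1 \<le> i \<and> i + 1 < length s \<and> s ! (i - 1) < s ! i \<and> s ! i = s ! (i + 1)"

lemma ap_eq_card_plateau: "ap s = card {i. plateau s i}"
  by (simp add: ap_def plateau_def)

lemma finite_plateau: "finite {i. plateau s i}"
  by (rule finite_subset[of _ "{..<length s}"]) (auto simp: plateau_def)

lemma plateau_not_plateau_Suc: "plateau s i \<Longrightarrow> \<not> plateau s (Suc i)"
  by (auto simp: plateau_def)

lemma plateau_insert_pair:
  assumes "\<forall>z\<in>set xs. z < m" "p \<le> length xs"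
  shows "{i. plateau (insert_copies p 2 m xs) i} = {i. plateau xs i \<and> i + 1 < p}
     \<union> (if 1 \<le> p then {p} else {}) \<union> (\<lambda>i. i + 2) ` {i. plateau xs i \<and> p < i}" (is "?L = ?R")
proof (rule set_eqI)
  fix j
  have lt: "\<And>i. i < length xs \<Longrightarrow> xs ! i < m" using assms(1) by auto
  consider "j + 1 < p" | "j + 1 = p" | "j = p" | "j = p + 1 \<or> j = p + 2" | "p + 3 \<le> j"
    by linarith
  then show "j \<in> ?L \<longleftrightarrow> j \<in> ?R"
  proof cases
    case 1
    then show ?thesis using assms(2) by (auto simp: plateau_def nth_insert_copies)
  next
    case 2
    then have "xs ! j < m" using assms(2) lt by auto
    then show ?thesis using 2 assms(2) by (auto simp: plateau_def nth_insert_copies)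
  next
    case 3
    then show ?thesis using assms(2) lt by (auto simp: plateau_def nth_insert_copies)
  next
    case 4
    then show ?thesis using assms(2) lt[of p] lt[of "Suc p"] by (auto simp: plateau_def nth_insert_copies)
  next
    case 5
    then obtain i where i: "j = i + 2" "p < i" by (intro that[of "j - 2"]) auto
    have "j \<in> ?L \<longleftrightarrow> plateau xs i"
    proof -
      have e: "j - 1 = (i - 1) + 2" "j + 1 = (i + 1) + 2" using i by auto
      show ?thesis
        unfolding plateau_def e using i assms(2) by (auto simp: nth_insert_copies)
    qed
    moreover have "j \<in> ?R \<longleftrightarrow> plateau xs i"
      using i by (auto simp: image_iff)
    ultimately show ?thesis by simp
  qed
qed

definition near_plateau :: "nat list \<Rightarrow> nat \<Rightarrow> bool" where
  "near_plateau s p \<longleftrightarrow> plateau s (p - 1) \<or> plateau s p"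

lemma near_plateau_range: "near_plateau xs p \<Longrightarrow> 1 \<le> p \<and> p < length xs"
  by (auto simp: near_plateau_def plateau_def)

lemma card_plateau_window:
  "card {i. plateau xs i \<and> p \<le> i + 1 \<and> i \<le> p} = (if near_plateau xs p then 1 else 0)"
proof (cases p)
  case 0
  then have "{i. plateau xs i \<and> p \<le> i + 1 \<and> i \<le> p} = {}" by (auto simp: plateau_def)
  then show ?thesis using 0 by (simp add: near_plateau_def plateau_def)
next
  case (Suc k)
  then have window: "{i. plateau xs i \<and> p \<le> i + 1 \<and> i \<le> p} = {i. plateau xs i \<and> (i = k \<or> i = Suc k)}"
    by auto
  show ?thesis
  proof (cases "plateau xs k")
    case True
    then have "{i. plateau xs i \<and> (i = k \<or> i = Suc k)} = {k}"
      using plateau_not_plateau_Suc[OF True] by auto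
    then show ?thesis unfolding window using Suc True by (simp add: near_plateau_def)
  next
    case False
    then have "{i. plateau xs i \<and> (i = k \<or> i = Suc k)} = (if plateau xs (Suc k) then {Suc k} else {})"
      by auto
    then show ?thesis unfolding window using Suc False by (simp add: near_plateau_def)
  qed
qed

text \<open>Inserting the pair at slot \<open>p \<ge> 1\<close> creates the plateau \<open>p\<close> and destroys the
plateau at \<open>p - 1\<close> or \<open>p\<close>, if there is one.\<close>

lemma ap_insert_pair:
  assumes "\<forall>z\<in>set xs. z < m" "p \<le> length xs"
  shows "ap (insert_copies p 2 m xs) = ap xs + (if p = 0 \<or> near_plateau xs p then 0 else 1)"
proof -
  let ?A = "{i. plateau xs i \<and> i + 1 < p}"
  let ?M = "{i. plateau xs i \<and> p \<le> i + 1 \<and> i \<le> p}"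
  let ?B = "{i. plateau xs i \<and> p < i}"
  have "i + 1 < p \<or> (p \<le> i + 1 \<and> i \<le> p) \<or> p < i" for i by linarith
  then have "ap xs = card (?A \<union> ?M \<union> (\<lambda>i. i + 0) ` ?B)"
    unfolding ap_eq_card_plateau by (intro arg_cong[where f = card]) auto
  also have "\<dots> = card ?A + card ?M + card ?B"
    by (rule card_Un_shifted) (simp_all add: finite_plateau)
  finally have "ap xs = card ?A + card ?M + card ?B" .
  moreover have "ap (insert_copies p 2 m xs) = card ?A + (if 1 \<le> p then 1 else 0) + card ?B"
    unfolding ap_eq_card_plateau plateau_insert_pair[OF assms]
    by (subst card_Un_shifted) (simp_all add: finite_plateau)
  moreover have "near_plateau xs p \<Longrightarrow> 1 \<le> p" using near_plateau_range by blast
  moreover have "card ?M = (if near_plateau xs p then 1 else 0)" by (rule card_plateau_window)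
  ultimately show ?thesis by auto
qed

text \<open>Each plateau \<open>i\<close> blocks the two slots \<open>i\<close> and \<open>i + 1\<close>, one of each parity, and no
two plateaux are adjacent.\<close>

lemma card_near_plateau_parity: "card {p. near_plateau xs p \<and> (even p \<longleftrightarrow> b)} = ap xs"
proof -
  let ?f = "\<lambda>j::nat. if even j \<longleftrightarrow> b then j else Suc j"
  have inj: "inj_on ?f {i. plateau xs i}"
  proof (rule inj_onI)
    fix i j assume "i \<in> {i. plateau xs i}" "j \<in> {i. plateau xs i}" "?f i = ?f j"
    then show "i = j" using plateau_not_plateau_Suc by (auto split: if_splits)
  qed
  have img: "?f ` {i. plateau xs i} = {p. near_plateau xs p \<and> (even p \<longleftrightarrow> b)}"
  proof (rule set_eqI, rule iffI)
    fix p assume "p \<in> ?f ` {i. plateau xs i}"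
    then show "p \<in> {p. near_plateau xs p \<and> (even p \<longleftrightarrow> b)}"
      by (auto simp: near_plateau_def split: if_splits)
  next
    fix p assume p: "p \<in> {p. near_plateau xs p \<and> (even p \<longleftrightarrow> b)}"
    then have "1 \<le> p" using near_plateau_range by blast
    show "p \<in> ?f ` {i. plateau xs i}"
    proof (cases "plateau xs p")
      case True then show ?thesis using p by (intro image_eqI[of _ _ p]) auto
    next
      case False
      then have "plateau xs (p - 1)" using p by (simp add: near_plateau_def)
      moreover have "?f (p - 1) = p" using p \<open>1 \<le> p\<close> by (cases p) auto
      ultimately show ?thesis by (intro image_eqI[of _ _ "p - 1"]) auto
    qed
  qed
  show ?thesis unfolding ap_eq_card_plateau img[symmetric] by (rule card_image[OF inj])
qed

definition ascent :: "nat list \<Rightarrow> nat \<Rightarrow> bool" where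
  "ascent s i \<longleftrightarrow> 1 \<le> i \<and> i < length s \<and> s ! (i - 1) < s ! i"

lemma asc_eq_card_ascent: "asc s = card {i. ascent s i}"
  by (simp add: asc_def ascent_def)

lemma finite_ascent: "finite {i. ascent s i}"
  by (rule finite_subset[of _ "{..<length s}"]) (auto simp: ascent_def)

lemma ascent_range: "ascent xs p \<Longrightarrow> 1 \<le> p \<and> p < length xs"
  by (simp add: ascent_def)

lemma ascent_insert_max:
  assumes "\<forall>z\<in>set xs. z < m" "p \<le> length xs"
  shows "{i. ascent (insert_copies p 1 m xs) i} = {i. ascent xs i \<and> i < p}
     \<union> (if 1 \<le> p then {p} else {}) \<union> (\<lambda>i. i + 1) ` {i. ascent xs i \<and> p < i}" (is "?L = ?R")
proof (rule set_eqI)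
  fix j
  have lt: "\<And>i. i < length xs \<Longrightarrow> xs ! i < m" using assms(1) by auto
  consider "j < p" | "j = p" | "j = p + 1" | "p + 2 \<le> j" by linarith
  then show "j \<in> ?L \<longleftrightarrow> j \<in> ?R"
  proof cases
    case 1
    then show ?thesis using assms(2) by (auto simp: ascent_def nth_insert_copies)
  next
    case 2
    then show ?thesis using assms(2) lt[of "p - 1"] by (auto simp: ascent_def nth_insert_copies)
  next
    case 3
    then show ?thesis using assms(2) lt[of p] by (auto simp: ascent_def nth_insert_copies)
  next
    case 4
    then obtain i where i: "j = i + 1" "p < i" by (intro that[of "j - 1"]) auto
    have "j \<in> ?L \<longleftrightarrow> ascent xs i"
    proof -
      have e: "j - 1 = (i - 1) + 1" using i by auto
      show ?thesis
        unfolding ascent_def e using i assms(2) by (auto simp: nth_insert_copies)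
    qed
    moreover have "j \<in> ?R \<longleftrightarrow> ascent xs i"
      using i by (auto simp: image_iff)
    ultimately show ?thesis by simp
  qed
qed

lemma asc_insert_max:
  assumes "\<forall>z\<in>set xs. z < m" "p \<le> length xs"
  shows "asc (insert_copies p 1 m xs) = asc xs + (if p = 0 \<or> ascent xs p then 0 else 1)"
proof -
  let ?A = "{i. ascent xs i \<and> i < p}"
  let ?M = "{i. ascent xs i \<and> i = p}"
  let ?B = "{i. ascent xs i \<and> p < i}"
  have "i < p \<or> i = p \<or> p < i" for i :: nat by linarith
  then have "asc xs = card (?A \<union> ?M \<union> (\<lambda>i. i + 0) ` ?B)"
    unfolding asc_eq_card_ascent by (intro arg_cong[where f = card]) auto
  also have "\<dots> = card ?A + card ?M + card ?B"
    by (rule card_Un_shifted) (simp_all add: finite_ascent)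
  finally have "asc xs = card ?A + card ?M + card ?B" .
  moreover have "asc (insert_copies p 1 m xs) = card ?A + (if 1 \<le> p then 1 else 0) + card ?B"
    unfolding asc_eq_card_ascent ascent_insert_max[OF assms]
    by (subst card_Un_shifted) (simp_all add: finite_ascent)
  moreover have "?M = (if ascent xs p then {p} else {})" by auto
  then have "card ?M = (if ascent xs p then 1 else 0)" by simp
  moreover have "ascent xs p \<Longrightarrow> 1 \<le> p" using ascent_range by blast
  ultimately show ?thesis by auto
qed

lemma even_idx_eq_card_first_index: "even_idx s = card {x \<in> set s. even (Suc (first_index s x))}"
  by (simp add: even_idx_def first_index_def)

lemma even_idx_insert_pair:
  assumes "\<forall>z\<in>set xs. z < m" "p \<le> length xs"
  shows "even_idx (insert_copies p 2 m xs) = even_idx xs + (if odd p then 1 else 0)"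
proof -
  have "m \<notin> set xs" using assms(1) by blast
  have "even (first_index (insert_copies p 2 m xs) x) \<longleftrightarrow> even (first_index xs x)" if "x \<in> set xs" for x
  proof -
    have "x \<noteq> m" using that \<open>m \<notin> set xs\<close> by blast
    then show ?thesis using first_index_insert_copies_old[OF that _ assms(2), of m 2] by simp
  qed
  then have "{x \<in> set (insert_copies p 2 m xs). even (Suc (first_index (insert_copies p 2 m xs) x))}
      = (if odd p then {m} else {}) \<union> {x \<in> set xs. even (Suc (first_index xs x))}"
    using first_index_insert_copies_new[OF \<open>m \<notin> set xs\<close> assms(2), of 2] by auto
  moreover have "m \<notin> {x \<in> set xs. even (Suc (first_index xs x))}" using \<open>m \<notin> set xs\<close> by simp
  ultimately show ?thesis unfolding even_idx_eq_card_first_index by simp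
qed

lemma multiset2_Suc: "multiset2 (Suc n) = multiset2 n + {#Suc n, Suc n#}"
  by (simp add: multiset2_def)

lemma set_mset_multiset2: "set_mset (multiset2 n) = {1..n}"
  by (induction n) (auto simp: multiset2_Suc multiset2_def)

lemma size_multiset2: "size (multiset2 n) = 2 * n"
  by (induction n) (auto simp: multiset2_Suc multiset2_def)

definition stirling_condition :: "nat list \<Rightarrow> bool" where
  "stirling_condition w \<longleftrightarrow>
     (\<forall>i j k. i < j \<and> j < k \<and> k < length w \<and> w ! i = w ! k \<longrightarrow> w ! j > w ! i)"

lemma stirling_perms_iff:
  "\<sigma> \<in> stirling_perms n \<longleftrightarrow> mset \<sigma> = multiset2 n \<and> stirling_condition \<sigma>"
  by (simp add: stirling_perms_def stirling_condition_def)

lemma stirling_perm_length_set: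
  assumes "\<sigma> \<in> stirling_perms n"
  shows "length \<sigma> = 2 * n" "set \<sigma> = {1..n}"
proof -
  have "mset \<sigma> = multiset2 n" using assms by (simp add: stirling_perms_iff)
  from arg_cong[OF this, of size] arg_cong[OF this, of set_mset]
  show "length \<sigma> = 2 * n" "set \<sigma> = {1..n}" by (simp_all add: size_multiset2 set_mset_multiset2)
qed

lemma stirling_condition_insert_pair:
  assumes ok: "stirling_condition xs" and lt: "\<forall>z\<in>set xs. z < m" and p: "p \<le> length xs"
  shows "stirling_condition (insert_copies p 2 m xs)"
  unfolding stirling_condition_def
proof (intro allI impI)
  let ?w = "insert_copies p 2 m xs"
  let ?u = "\<lambda>t. if t < p then t else t - 2"
  have mid: "?w ! t = m" if "p \<le> t" "t < p + 2" for t
    using that p by (simp add: nth_insert_copies)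
  have old: "?w ! t = xs ! ?u t \<and> ?u t < length xs \<and> xs ! ?u t < m"
    if "t < length xs + 2" "\<not> (p \<le> t \<and> t < p + 2)" for t
    using that p lt by (auto simp: nth_insert_copies)
  fix i j k assume a: "i < j \<and> j < k \<and> k < length ?w \<and> ?w ! i = ?w ! k"
  then have k: "k < length xs + 2" using p by simp
  show "?w ! j > ?w ! i"
  proof (cases "p \<le> i \<and> i < p + 2")
    case True
    then have "p \<le> k \<and> k < p + 2" using mid old[OF k] a by fastforce
    then show ?thesis using True a by linarith
  next
    case False
    then have i: "?w ! i = xs ! ?u i" "xs ! ?u i < m" using old a k by auto
    then have "\<not> (p \<le> k \<and> k < p + 2)" using mid a by fastforce
    then have kk: "?w ! k = xs ! ?u k" "?u k < length xs" using old[OF k] by auto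
    show ?thesis
    proof (cases "p \<le> j \<and> j < p + 2")
      case True
      then show ?thesis using mid i by simp
    next
      case jb: False
      then have "?w ! j = xs ! ?u j" using old a k by auto
      moreover have "?u i < ?u j" "?u j < ?u k" using a False jb \<open>\<not> (p \<le> k \<and> k < p + 2)\<close> by auto
      ultimately show ?thesis using ok i kk a unfolding stirling_condition_def by metis
    qed
  qed
qed

lemma stirling_condition_remove_copies:
  assumes ok: "stirling_condition (insert_copies p k m xs)" and p: "p \<le> length xs"
  shows "stirling_condition xs"
  unfolding stirling_condition_def
proof (intro allI impI)
  fix h i j assume a: "h < i \<and> i < j \<and> j < length xs \<and> xs ! h = xs ! j"
  let ?s = "\<lambda>t. if t < p then t else t + k"
  have e: "insert_copies p k m xs ! ?s t = xs ! t" if "t < length xs" for t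
    using that p by (auto simp: nth_insert_copies)
  have "?s h < ?s i" "?s i < ?s j" "?s j < length (insert_copies p k m xs)" using a p by auto
  moreover have "insert_copies p k m xs ! ?s h = insert_copies p k m xs ! ?s j" using e a by simp
  ultimately have "insert_copies p k m xs ! ?s i > insert_copies p k m xs ! ?s h"
    using ok unfolding stirling_condition_def by blast
  then show "xs ! i > xs ! h" using e a by simp
qed

lemma stirling_condition_max_adjacent:
  assumes "stirling_condition (A @ m # C @ m # D)" "\<forall>z\<in>set C. z \<le> m"
  shows "C = []"
proof (rule ccontr)
  assume "C \<noteq> []"
  then obtain c C' where C: "C = c # C'" by (cases C) auto
  let ?w = "A @ m # C @ m # D"
  have "?w ! length A = m" "?w ! Suc (length A) = c" "?w ! (Suc (length A) + length C) = m"
    using C by (simp_all add: nth_append)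
  moreover have "Suc (length A) < Suc (length A) + length C" "Suc (length A) + length C < length ?w"
    using C by simp_all
  ultimately have "c > m"
    using assms(1)[unfolded stirling_condition_def, rule_format,
        of "length A" "Suc (length A)" "Suc (length A) + length C"]
    by simp
  then show False using assms(2) C by simp
qed

lemma stirling_perm_insert_pair:
  assumes "\<sigma> \<in> stirling_perms n" "p \<le> 2 * n"
  shows "insert_copies p 2 (Suc n) \<sigma> \<in> stirling_perms (Suc n)"
proof -
  note \<sigma> = stirling_perm_length_set[OF assms(1)]
  have "mset (insert_copies p 2 (Suc n) \<sigma>) = multiset2 (Suc n)"
    using assms(1) by (simp add: mset_insert_pair multiset2_Suc stirling_perms_iff)
  moreover have "stirling_condition (insert_copies p 2 (Suc n) \<sigma>)"
    using assms \<sigma> by (intro stirling_condition_insert_pair) (auto simp: stirling_perms_iff)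
  ultimately show ?thesis by (simp add: stirling_perms_iff)
qed

lemma stirling_perm_remove_max:
  assumes "\<tau> \<in> stirling_perms (Suc n)"
  obtains \<sigma> p where "\<sigma> \<in> stirling_perms n" "p \<le> 2 * n" "\<tau> = insert_copies p 2 (Suc n) \<sigma>"
proof -
  let ?m = "Suc n"
  note \<tau> = stirling_perm_length_set[OF assms]
  have ok: "stirling_condition \<tau>" and ms: "mset \<tau> = multiset2 (Suc n)"
    using assms by (auto simp: stirling_perms_iff)
  obtain A B where AB: "\<tau> = A @ ?m # B" "?m \<notin> set A"
    using split_list_first[of ?m \<tau>] \<tau>(2) by auto
  have "?m \<notin># multiset2 n" by (simp add: set_mset_multiset2)
  then have "count (mset \<tau>) ?m = 2" by (simp add: ms multiset2_Suc not_in_iff)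
  moreover have "count (mset A) ?m = 0" using AB(2) by simp
  ultimately have "count (mset B) ?m = 1" using AB(1) by simp
  then have "?m \<in> set B" using count_mset_0_iff[of B ?m] by auto
  then obtain C D where CD: "B = C @ ?m # D" by (meson split_list)
  have "C = []"
    using ok \<tau>(2) AB CD by (intro stirling_condition_max_adjacent[of A ?m C D]) auto
  then have \<tau>_eq: "\<tau> = insert_copies (length A) 2 ?m (A @ D)"
    using AB CD by (simp add: insert_copies_def numeral_2_eq_2)
  have "mset (A @ D) + {#?m, ?m#} = multiset2 n + {#?m, ?m#}"
    using ms unfolding \<tau>_eq mset_insert_pair multiset2_Suc .
  then have "mset (A @ D) = multiset2 n" by (rule add_right_imp_eq)
  moreover have "stirling_condition (A @ D)"
    using ok unfolding \<tau>_eq by (rule stirling_condition_remove_copies) simp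
  ultimately have "A @ D \<in> stirling_perms n" by (simp add: stirling_perms_iff)
  moreover have "length A \<le> 2 * n" using stirling_perm_length_set(1)[OF calculation] by simp
  ultimately show ?thesis using \<tau>_eq that by blast
qed

lemma bij_betw_insert_pair_stirling:
  "bij_betw (\<lambda>(\<sigma>, p). insert_copies p 2 (Suc n) \<sigma>) (stirling_perms n \<times> {0..2 * n})
     (stirling_perms (Suc n))"
proof (rule bij_betw_imageI)
  show "inj_on (\<lambda>(\<sigma>, p). insert_copies p 2 (Suc n) \<sigma>) (stirling_perms n \<times> {0..2 * n})"
  proof (rule inj_onI, clarsimp)
    fix \<sigma> p \<sigma>' p'
    assume "\<sigma> \<in> stirling_perms n" "\<sigma>' \<in> stirling_perms n" "p \<le> 2 * n" "p' \<le> 2 * n"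
      "insert_copies p 2 (Suc n) \<sigma> = insert_copies p' 2 (Suc n) \<sigma>'"
    then show "\<sigma> = \<sigma>' \<and> p = p'"
      using insert_copies_inj[of "Suc n" \<sigma> \<sigma>' p p' 2]
        stirling_perm_length_set[of \<sigma> n] stirling_perm_length_set[of \<sigma>' n] by auto
  qed
  show "(\<lambda>(\<sigma>, p). insert_copies p 2 (Suc n) \<sigma>) ` (stirling_perms n \<times> {0..2 * n}) = stirling_perms (Suc n)"
  proof
    show "(\<lambda>(\<sigma>, p). insert_copies p 2 (Suc n) \<sigma>) ` (stirling_perms n \<times> {0..2 * n}) \<subseteq> stirling_perms (Suc n)"
      using stirling_perm_insert_pair by auto
  next
    show "stirling_perms (Suc n) \<subseteq> (\<lambda>(\<sigma>, p). insert_copies p 2 (Suc n) \<sigma>) ` (stirling_perms n \<times> {0..2 * n})"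
    proof
      fix \<tau> assume "\<tau> \<in> stirling_perms (Suc n)"
      then obtain \<sigma> p where "\<sigma> \<in> stirling_perms n" "p \<le> 2 * n" "\<tau> = insert_copies p 2 (Suc n) \<sigma>"
        by (rule stirling_perm_remove_max)
      then show "\<tau> \<in> (\<lambda>(\<sigma>, p). insert_copies p 2 (Suc n) \<sigma>) ` (stirling_perms n \<times> {0..2 * n})"
        by (intro image_eqI[of _ _ "(\<sigma>, p)"]) auto
    qed
  qed
qed

text \<open>The new maximum \<open>n + 1\<close> is inserted at slot \<open>p\<close> and marked iff \<open>b\<close>; in front
(\<open>p = 0\<close>) it becomes a left-to-right minimum and must stay unmarked.\<close>

definition insert_marked :: "nat \<Rightarrow> (nat list \<times> nat set) \<times> (nat \<times> bool) \<Rightarrow> nat list \<times> nat set" where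
  "insert_marked n =
     (\<lambda>((\<pi>, M), (p, b)). (insert_copies p 1 (Suc n) \<pi>, if b then insert (Suc n) M else M))"

definition marked_slots :: "nat \<Rightarrow> (nat \<times> bool) set" where
  "marked_slots n = insert (0, False) ({1..n} \<times> UNIV)"

lemma marked_perm_props:
  assumes "(\<pi>, M) \<in> marked_perms n"
  shows "distinct \<pi>" "set \<pi> = {1..n}" "length \<pi> = n" "M \<subseteq> set \<pi> - lrmin_vals \<pi>"
    "finite M" "Suc n \<notin> M"
proof -
  show d: "distinct \<pi>" and s: "set \<pi> = {1..n}" and m: "M \<subseteq> set \<pi> - lrmin_vals \<pi>"
    using assms by (auto simp: marked_perms_def)
  show "length \<pi> = n" using distinct_card[OF d] s by simp
  show "finite M" using m finite_subset by blast
  show "Suc n \<notin> M" using m s by auto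
qed

lemma insert_marked_mem:
  assumes "(\<pi>, M) \<in> marked_perms n" "(p, b) \<in> marked_slots n"
  shows "insert_marked n ((\<pi>, M), (p, b)) \<in> marked_perms (Suc n)"
proof -
  note \<pi> = marked_perm_props[OF assms(1)]
  have lt: "\<forall>z\<in>set \<pi>. z < Suc n" and p: "p \<le> length \<pi>"
    using assms(2) \<pi>(2,3) by (auto simp: marked_slots_def)
  have "Suc n \<notin> lrmin_vals \<pi>" using lrmin_vals_subset[of \<pi>] \<pi>(2) by auto
  then have "(if b then insert (Suc n) M else M)
      \<subseteq> set (insert_copies p 1 (Suc n) \<pi>) - lrmin_vals (insert_copies p 1 (Suc n) \<pi>)"
    using assms(2) \<pi>(4,6) lrmin_vals_insert_copies[OF lt p, of 1]
    by (auto simp: marked_slots_def)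
  moreover have "distinct (insert_copies p 1 (Suc n) \<pi>)"
    using \<pi>(1,2) by (intro distinct_insert_copies) auto
  moreover have "set (insert_copies p 1 (Suc n) \<pi>) = {1..Suc n}" using \<pi>(2) by auto
  ultimately show ?thesis by (simp add: insert_marked_def marked_perms_def)
qed

lemma marked_perm_remove_max:
  assumes "(\<pi>', M') \<in> marked_perms (Suc n)"
  obtains x where "x \<in> marked_perms n \<times> marked_slots n" "(\<pi>', M') = insert_marked n x"
proof -
  let ?m = "Suc n"
  have d': "distinct \<pi>'" and s': "set \<pi>' = {1..Suc n}" and m': "M' \<subseteq> set \<pi>' - lrmin_vals \<pi>'"
    using assms by (auto simp: marked_perms_def)
  have "?m \<in> set \<pi>'" using s' by simp
  then obtain A B where AB: "\<pi>' = A @ ?m # B" by (meson split_list)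
  let ?\<pi> = "A @ B" and ?p = "length A"
  have "?m \<notin> set A" "?m \<notin> set B" "distinct ?\<pi>" using d' AB by simp_all
  then have "set ?\<pi> = set \<pi>' - {?m}" using AB by auto
  also have "\<dots> = {1..n}" using s' by auto
  finally have s: "set ?\<pi> = {1..n}" .
  have \<pi>'_eq: "\<pi>' = insert_copies ?p 1 ?m ?\<pi>" using AB by (simp add: insert_copies_def)
  have lv: "lrmin_vals \<pi>' = (if ?p = 0 then insert ?m (lrmin_vals ?\<pi>) else lrmin_vals ?\<pi>)"
    unfolding \<pi>'_eq using s by (intro lrmin_vals_insert_copies) auto
  have "(?\<pi>, M' - {?m}) \<in> marked_perms n"
    using m' \<open>distinct ?\<pi>\<close> s AB lv by (auto simp: marked_perms_def split: if_splits)
  moreover have "(?p, ?m \<in> M') \<in> marked_slots n"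
  proof (cases "?p = 0")
    case True
    then show ?thesis using m' lv by (auto simp: marked_slots_def)
  next
    case False
    have "length ?\<pi> = n" using distinct_card[OF \<open>distinct ?\<pi>\<close>] s by simp
    then show ?thesis using False by (auto simp: marked_slots_def Suc_le_eq)
  qed
  moreover have "(\<pi>', M') = insert_marked n ((?\<pi>, M' - {?m}), (?p, ?m \<in> M'))"
    using \<pi>'_eq by (auto simp: insert_marked_def)
  ultimately show ?thesis using that by blast
qed

lemma bij_betw_insert_marked:
  "bij_betw (insert_marked n) (marked_perms n \<times> marked_slots n) (marked_perms (Suc n))"
proof (rule bij_betw_imageI)
  show "inj_on (insert_marked n) (marked_perms n \<times> marked_slots n)"
  proof (rule inj_onI)
    fix x y
    assume x: "x \<in> marked_perms n \<times> marked_slots n" and y: "y \<in> marked_perms n \<times> marked_slots n"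
      and eq: "insert_marked n x = insert_marked n y"
    obtain \<pi>1 M1 p1 b1 \<pi>2 M2 p2 b2
      where xy: "x = ((\<pi>1, M1), p1, b1)" "y = ((\<pi>2, M2), p2, b2)"
      by (cases x, cases y) auto
    have a1: "(\<pi>1, M1) \<in> marked_perms n" "(p1, b1) \<in> marked_slots n"
      and a2: "(\<pi>2, M2) \<in> marked_perms n" "(p2, b2) \<in> marked_slots n"
      using x y xy by auto
    note m1 = marked_perm_props[OF a1(1)] and m2 = marked_perm_props[OF a2(1)]
    have "p1 \<le> length \<pi>1" "p2 \<le> length \<pi>2"
      using a1(2) a2(2) m1(3) m2(3) by (auto simp: marked_slots_def)
    moreover have "insert_copies p1 1 (Suc n) \<pi>1 = insert_copies p2 1 (Suc n) \<pi>2"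
      and marks: "(if b1 then insert (Suc n) M1 else M1) = (if b2 then insert (Suc n) M2 else M2)"
      using eq xy by (simp_all add: insert_marked_def)
    ultimately have "p1 = p2 \<and> \<pi>1 = \<pi>2" using m1(2) m2(2) by (intro insert_copies_inj) auto
    moreover have "b1 = b2 \<and> M1 = M2"
      using marks m1(6) m2(6) by (cases b1; cases b2) (auto simp: insert_ident)
    ultimately show "x = y" using xy by simp
  qed
  show "insert_marked n ` (marked_perms n \<times> marked_slots n) = marked_perms (Suc n)"
  proof
    show "insert_marked n ` (marked_perms n \<times> marked_slots n) \<subseteq> marked_perms (Suc n)"
      using insert_marked_mem by auto
  next
    show "marked_perms (Suc n) \<subseteq> insert_marked n ` (marked_perms n \<times> marked_slots n)"
      by (clarify, erule marked_perm_remove_max) auto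
  qed
qed

lemma sum_if_eq_card:
  fixes u v :: "'a::comm_semiring_1"
  assumes "finite S"
  shows "(\<Sum>p\<in>S. if P p then u else v)
    = of_nat (card {p \<in> S. P p}) * u + of_nat (card S - card {p \<in> S. P p}) * v"
proof -
  have "S - {p \<in> S. P p} = {p \<in> S. \<not> P p}" by blast
  then have "card {p \<in> S. \<not> P p} = card S - card {p \<in> S. P p}"
    using card_Diff_subset[of "{p \<in> S. P p}" S] assms by simp
  moreover have "S \<inter> {p. P p} = {p \<in> S. P p}" "S \<inter> - {p. P p} = {p \<in> S. \<not> P p}" by auto
  ultimately show ?thesis by (simp add: sum.If_cases[OF assms])
qed

lemma card_parity_interval: "card {p \<in> {1..2 * n}. even p \<longleftrightarrow> b} = n"
proof -
  let ?f = "\<lambda>k::nat. 2 * k + (if b then 2 else 1)"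
  have "{p \<in> {1..2 * n}. even p \<longleftrightarrow> b} = ?f ` {..<n}"
  proof (rule set_eqI, rule iffI)
    fix p assume "p \<in> {p \<in> {1..2 * n}. even p \<longleftrightarrow> b}"
    then have "p = ?f ((p - 1) div 2)" "(p - 1) div 2 < n" by (cases b; simp; presburger)+
    then show "p \<in> ?f ` {..<n}" by blast
  qed (auto split: if_splits)
  moreover have "inj_on ?f {..<n}" by (simp add: inj_on_def)
  ultimately show ?thesis by (simp add: card_image)
qed

lemma sum_parity_slots_near_plateau:
  fixes u v :: "'a::comm_semiring_1"
  assumes "length s = 2 * n"
  shows "(\<Sum>p\<in>{p \<in> {1..2 * n}. even p \<longleftrightarrow> b}. if near_plateau s p then u else v)
    = of_nat (ap s) * u + of_nat (n - ap s) * v"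
proof -
  have "{p \<in> {p \<in> {1..2 * n}. even p \<longleftrightarrow> b}. near_plateau s p}
      = {p. near_plateau s p \<and> (even p \<longleftrightarrow> b)}"
    using near_plateau_range[of s] assms by (auto dest: less_imp_le)
  moreover have "finite {p \<in> {1..2 * n}. even p \<longleftrightarrow> b}" by simp
  ultimately show ?thesis
    by (simp only: sum_if_eq_card card_near_plateau_parity card_parity_interval)
qed

text \<open>The total weight of the children of an object with statistics \<open>(l, a, e)\<close> in the
generating trees below: one child gets a new left-to-right minimum; each of the other \<open>n\<close>
slots yields two children differing by one in the third statistic, and exactly \<open>a\<close> of these
slots leave the second statistic unchanged.\<close>

definition weight_step ::
    "nat \<Rightarrow> (nat \<Rightarrow> nat \<Rightarrow> nat \<Rightarrow> 'a::comm_semiring_1) \<Rightarrow> nat \<Rightarrow> nat \<Rightarrow> nat \<Rightarrow> 'a" where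
  "weight_step n g l a e = g (l + 1) a e + of_nat a * (g l a e + g l a (e + 1))
     + of_nat (n - a) * (g l (a + 1) e + g l (a + 1) (e + 1))"

lemma sum_insert_pair_stirling:
  fixes g :: "nat \<Rightarrow> nat \<Rightarrow> nat \<Rightarrow> 'a::comm_semiring_1"
  assumes "\<sigma> \<in> stirling_perms n"
  shows "(\<Sum>p\<in>{0..2 * n}. g (lrmin (insert_copies p 2 (Suc n) \<sigma>)) (ap (insert_copies p 2 (Suc n) \<sigma>))
      (even_idx (insert_copies p 2 (Suc n) \<sigma>)))
    = weight_step n g (lrmin \<sigma>) (ap \<sigma>) (even_idx \<sigma>)"
proof -
  note \<sigma> = stirling_perm_length_set[OF assms]
  let ?l = "lrmin \<sigma>" and ?a = "ap \<sigma>" and ?e = "even_idx \<sigma>"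
  let ?F = "\<lambda>p. g (?l + (if p = 0 then 1 else 0)) (?a + (if p = 0 \<or> near_plateau \<sigma> p then 0 else 1))
    (?e + (if odd p then 1 else 0))"
  let ?Odd = "{p \<in> {1..2 * n}. even p \<longleftrightarrow> False}" and ?Even = "{p \<in> {1..2 * n}. even p \<longleftrightarrow> True}"
  have lt: "\<forall>z\<in>set \<sigma>. z < Suc n" using \<sigma>(2) by auto
  have "(\<Sum>p\<in>{0..2 * n}. g (lrmin (insert_copies p 2 (Suc n) \<sigma>)) (ap (insert_copies p 2 (Suc n) \<sigma>))
      (even_idx (insert_copies p 2 (Suc n) \<sigma>))) = sum ?F {0..2 * n}"
    using lrmin_insert_copies[OF lt] ap_insert_pair[OF lt] even_idx_insert_pair[OF lt] \<sigma>(1)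
    by (intro sum.cong) auto
  also have "sum ?F {0..2 * n} = ?F 0 + sum ?F ?Odd + sum ?F ?Even"
  proof -
    have slots: "{0..2 * n} = insert 0 (?Odd \<union> ?Even)" by auto
    have fin: "finite (?Odd \<union> ?Even)" and zero: "0 \<notin> ?Odd \<union> ?Even" by auto
    have "sum ?F (?Odd \<union> ?Even) = sum ?F ?Odd + sum ?F ?Even"
      by (rule sum.union_disjoint) auto
    then show ?thesis unfolding slots sum.insert[OF fin zero] by (simp only: add.assoc)
  qed
  also have "sum ?F ?Odd
      = (\<Sum>p\<in>?Odd. if near_plateau \<sigma> p then g ?l ?a (?e + 1) else g ?l (?a + 1) (?e + 1))"
    by (intro sum.cong) auto
  also have "sum ?F ?Even = (\<Sum>p\<in>?Even. if near_plateau \<sigma> p then g ?l ?a ?e else g ?l (?a + 1) ?e)"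
    by (intro sum.cong) auto
  finally show ?thesis
    unfolding sum_parity_slots_near_plateau[OF \<sigma>(1)] weight_step_def by (simp add: algebra_simps)
qed

lemma sum_insert_marked:
  fixes g :: "nat \<Rightarrow> nat \<Rightarrow> nat \<Rightarrow> 'a::comm_semiring_1"
  assumes "(\<pi>, M) \<in> marked_perms n"
  shows "(\<Sum>d\<in>marked_slots n. g (lrmin (fst (insert_marked n ((\<pi>, M), d))))
      (asc (fst (insert_marked n ((\<pi>, M), d)))) (card (snd (insert_marked n ((\<pi>, M), d)))))
    = weight_step n g (lrmin \<pi>) (asc \<pi>) (card M)"
proof -
  note \<pi> = marked_perm_props[OF assms]
  let ?l = "lrmin \<pi>" and ?a = "asc \<pi>" and ?c = "card M"
  let ?F = "\<lambda>d. g (lrmin (fst (insert_marked n ((\<pi>, M), d))))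
      (asc (fst (insert_marked n ((\<pi>, M), d)))) (card (snd (insert_marked n ((\<pi>, M), d))))"
  have lt: "\<forall>z\<in>set \<pi>. z < Suc n" using \<pi>(2) by auto
  have "sum ?F (marked_slots n) = ?F (0, False) + (\<Sum>p\<in>{1..n}. \<Sum>b\<in>UNIV. ?F (p, b))"
    unfolding marked_slots_def by (simp add: sum.cartesian_product)
  also have "?F (0, False) = g (?l + 1) ?a ?c"
    using lrmin_insert_copies[OF lt, of 0 1] asc_insert_max[OF lt, of 0] by (simp add: insert_marked_def)
  also have "(\<Sum>p\<in>{1..n}. \<Sum>b\<in>UNIV. ?F (p, b)) = (\<Sum>p\<in>{1..n}. if ascent \<pi> p
      then g ?l ?a ?c + g ?l ?a (?c + 1) else g ?l (?a + 1) ?c + g ?l (?a + 1) (?c + 1))"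
    using lrmin_insert_copies[OF lt, of _ 1] asc_insert_max[OF lt] \<pi>(3,5,6)
    by (intro sum.cong) (auto simp: UNIV_bool insert_marked_def)
  also have "\<dots> = of_nat ?a * (g ?l ?a ?c + g ?l ?a (?c + 1))
      + of_nat (n - ?a) * (g ?l (?a + 1) ?c + g ?l (?a + 1) (?c + 1))"
  proof -
    have "{p \<in> {1..n}. ascent \<pi> p} = {p. ascent \<pi> p}" using \<pi>(3) by (auto dest: ascent_range)
    then show ?thesis
      by (simp only: sum_if_eq_card[OF finite_atLeastAtMost] asc_eq_card_ascent card_atLeastAtMost)
        simp
  qed
  finally show ?thesis unfolding weight_step_def by (simp add: algebra_simps)
qed

text \<open>The identity is proved for arbitrary weights \<open>g\<close>, so that the induction hypothesis
applies to the transformed weight \<open>weight_step n g\<close>.\<close>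

lemma sum_stirling_perms_eq_sum_marked_perms:
  fixes g :: "nat \<Rightarrow> nat \<Rightarrow> nat \<Rightarrow> 'a::comm_semiring_1"
  shows "(\<Sum>\<sigma>\<in>stirling_perms n. g (lrmin \<sigma>) (ap \<sigma>) (even_idx \<sigma>))
       = (\<Sum>x\<in>marked_perms n. g (lrmin (fst x)) (asc (fst x)) (card (snd x)))"
proof (induction n arbitrary: g)
  case 0
  have "stirling_perms 0 = {[]}" by (auto simp: stirling_perms_def multiset2_def)
  moreover have "marked_perms 0 = {([], {})}" by (auto simp: marked_perms_def)
  ultimately show ?case by (simp add: ap_def asc_def even_idx_def)
next
  case (Suc n)
  let ?G = "\<lambda>\<sigma>. g (lrmin \<sigma>) (ap \<sigma>) (even_idx \<sigma>)"
  let ?H = "\<lambda>x. g (lrmin (fst x)) (asc (fst x)) (card (snd x))"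
  have "sum ?G (stirling_perms (Suc n))
      = (\<Sum>(\<sigma>, p)\<in>stirling_perms n \<times> {0..2 * n}. ?G (insert_copies p 2 (Suc n) \<sigma>))"
    using sum.reindex_bij_betw[OF bij_betw_insert_pair_stirling, of ?G n] by (simp add: case_prod_beta')
  also have "\<dots> = (\<Sum>\<sigma>\<in>stirling_perms n. weight_step n g (lrmin \<sigma>) (ap \<sigma>) (even_idx \<sigma>))"
    by (simp add: sum.cartesian_product[symmetric] sum_insert_pair_stirling)
  also have "\<dots> = (\<Sum>x\<in>marked_perms n. weight_step n g (lrmin (fst x)) (asc (fst x)) (card (snd x)))"
    by (rule Suc.IH)
  also have "\<dots> = (\<Sum>x\<in>marked_perms n. \<Sum>d\<in>marked_slots n. ?H (insert_marked n (x, d)))"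
    by (intro sum.cong) (auto simp: sum_insert_marked)
  also have "\<dots> = sum ?H (marked_perms (Suc n))"
    using sum.reindex_bij_betw[OF bij_betw_insert_marked, of ?H n]
    by (simp add: sum.cartesian_product case_prod_beta')
  finally show ?case .
qed

theorem theorem1:
  fixes n :: nat and q x y :: "'a :: comm_ring_1"
  assumes "n \<ge> 1"
  shows "(\<Sum>\<sigma>\<in>stirling_perms n. q ^ lrmin \<sigma> * x ^ ap \<sigma> * y ^ even_idx \<sigma>) =
         (\<Sum>p\<in>marked_perms n. q ^ lrmin (fst p) * x ^ asc (fst p) * y ^ mark p)"
  using sum_stirling_perms_eq_sum_marked_perms[of "\<lambda>l a e. q ^ l * x ^ a * y ^ e" n]
  by (simp add: mark_def)

end
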